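(* Let $\lambda_1,\dots,\lambda_p>0$ be pairwise distinct, $\Sigma=\mathrm{diag}(\lambda_1,\dots,\lambda_p)$, $E$ a real symmetric $p\times p$ matrix, $\widehat\Sigma=\Sigma+E$, $x$ an eigenvalue of $\widehat\Sigma$, $k\in\arg\min_m|\lambda_m-x|$, and $q>0$. Suppose $$\|E(\nu(k))\|\le\frac12\qquad\text{and}\qquad \|E(\nu(k))\|\le \frac{q\sqrt{\delta_k}\,\nu_k(k)}{2\sqrt2}.$$ Then every eigenvector $\vec\eta$ of $\widehat\Sigma$ for $x$ satisfies $\langle\vec\eta,\vec\mu_k\rangle\neq0$, and the angle $\theta\in[0,\pi/2]$ between $\vec\eta$ and $\vec\mu_k$ (defined by $\cos\theta=|\langle\vec\eta,\vec\mu_k\rangle|/\|\vec\eta\|$) satisfies $\tan\theta\le q$, in particular $\sin\theta\le q$.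
   Context: $\vec\mu_1,\dots,\vec\mu_p$ are the standard basis vectors; $\|\cdot\|$ is the operator norm; $\delta_k=\min_{j\ne k}|\lambda_k-\lambda_j|$. For a vector $\nu\in[0,\infty)^p$, $E(\nu)=\mathrm{diag}(\nu)E\,\mathrm{diag}(\nu)$. The vector $\nu(k)$ is defined by $\nu_j(k)=\sqrt2\,|\lambda_j-\lambda_k|^{-1/2}$ for $j\ne k$ and $\nu_k(k)=\max_{j\ne k}\sqrt{\lambda_j/(|\lambda_j-\lambda_k|\,\lambda_k)}$. *)

theory Defs
  imports "HOL-Analysis.Analysis"
begin

definition diag_mat :: "('n::finite \<Rightarrow> real) \<Rightarrow> real ^ 'n ^ 'n" where
  "diag_mat lam = (\<chi> i j. if i = j then lam i else 0)"

definition op_norm :: "real ^ 'n ^ 'n \<Rightarrow> real" where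
  "op_norm A = onorm (\<lambda>v. A *v v)"

definition scaled_mat :: "('n::finite \<Rightarrow> real) \<Rightarrow> real ^ 'n ^ 'n \<Rightarrow> real ^ 'n ^ 'n" where
  "scaled_mat nu E = diag_mat nu ** E ** diag_mat nu"

definition gap :: "('n::finite \<Rightarrow> real) \<Rightarrow> 'n \<Rightarrow> real" where
  "gap lam k = Min {\<bar>lam k - lam j\<bar> | j. j \<noteq> k}"

definition nu_vec :: "('n::finite \<Rightarrow> real) \<Rightarrow> 'n \<Rightarrow> 'n \<Rightarrow> real" where
  "nu_vec lam k j =
     (if j \<noteq> k then sqrt 2 * \<bar>lam j - lam k\<bar> powr (-1/2)
      else Max {sqrt (lam i / (\<bar>lam i - lam k\<bar> * lam k)) | i. i \<noteq> k})"

end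

theory Submission
  imports Defs
begin

text \<open>Rescale an eigenvector \<open>\<eta>\<close> of \<open>\<Sigma> + E\<close> to \<open>w = diag(\<nu>)\<^sup>-\<^sup>1 \<eta>\<close>. The eigen-equation reads
  \<open>(E(\<nu>) w)\<^sub>j = \<nu>\<^sub>j\<^sup>2 (x - \<lambda>\<^sub>j) w\<^sub>j\<close>, and since \<open>k\<close> is the index closest to \<open>x\<close>, every weight
  \<open>\<nu>\<^sub>j\<^sup>2 |x - \<lambda>\<^sub>j|\<close> with \<open>j \<noteq> k\<close> is at least 1. Hence the part of \<open>w\<close> off the \<open>k\<close>-th axis is
  bounded by \<open>\<parallel>E(\<nu>) w\<parallel> \<le> \<parallel>E(\<nu>)\<parallel> (|w\<^sub>k| + off-axis part)\<close>, which with \<open>\<parallel>E(\<nu>)\<parallel> \<le> 1/2\<close> gives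
  an off-axis part of at most \<open>2 \<parallel>E(\<nu>)\<parallel> |w\<^sub>k|\<close>. Undoing the scaling costs a factor
  \<open>\<surd>(2/\<delta>\<^sub>k)\<close> off the axis and \<open>\<nu>\<^sub>k\<close> on it, so the second hypothesis yields that the off-axis
  part of \<open>\<eta>\<close> is at most \<open>q |\<eta>\<^sub>k|\<close>, which is exactly \<open>tan \<theta> \<le> q\<close>.\<close>

lemma diag_mat_mult_vec_nth: "(diag_mat d *v v) $ i = d i * v $ i"
  unfolding diag_mat_def matrix_vector_mult_def
  by (simp add: if_distrib[of "\<lambda>y. y * _"] cong: if_cong)

lemma bounded_linear_matrix_vector_mult: "bounded_linear (\<lambda>v. (A::real^'n::finite^'n) *v v)"
  by (simp add: linear_conv_bounded_linear matrix_vector_mul_linear)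

lemma op_norm_nonneg: "0 \<le> op_norm A"
  unfolding op_norm_def using onorm_pos_le[OF bounded_linear_matrix_vector_mult] .

lemma norm_matrix_vector_mult_le: "norm (A *v v) \<le> op_norm A * norm v"
  unfolding op_norm_def using onorm[OF bounded_linear_matrix_vector_mult] .

definition off_axis_norm :: "'n::finite \<Rightarrow> real ^ 'n \<Rightarrow> real" where
  "off_axis_norm k v = sqrt (\<Sum>j\<in>-{k}. (v $ j)\<^sup>2)"

lemma off_axis_norm_nonneg: "0 \<le> off_axis_norm k v"
  by (simp add: off_axis_norm_def sum_nonneg)

lemma norm_sq_axis_split: "(norm v)\<^sup>2 = (v $ k)\<^sup>2 + (off_axis_norm k v)\<^sup>2"
proof -
  have "(norm v)\<^sup>2 = (\<Sum>j\<in>UNIV. (v $ j)\<^sup>2)"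
    by (simp only: power2_norm_eq_inner inner_vec_def) (simp add: power2_eq_square)
  also have "\<dots> = (v $ k)\<^sup>2 + (\<Sum>j\<in>-{k}. (v $ j)\<^sup>2)"
    by (simp add: sum.remove[of UNIV k] Compl_eq_Diff_UNIV)
  finally show ?thesis
    by (simp add: off_axis_norm_def sum_nonneg)
qed

lemma norm_le_axis_plus_off_axis: "norm v \<le> \<bar>v $ k\<bar> + off_axis_norm k v"
proof -
  have "(norm v)\<^sup>2 \<le> (\<bar>v $ k\<bar> + off_axis_norm k v)\<^sup>2"
    using off_axis_norm_nonneg[of k v] by (simp add: norm_sq_axis_split[of v k] power2_sum)
  then show ?thesis
    using off_axis_norm_nonneg[of k v] by (simp add: power2_le_iff_abs_le)
qed

lemma off_axis_norm_le_norm: "off_axis_norm k v \<le> norm v"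
  by (rule power2_le_imp_le) (simp_all add: norm_sq_axis_split[of v k])

lemma off_axis_norm_mono:
  assumes "\<And>j. j \<noteq> k \<Longrightarrow> \<bar>v $ j\<bar> \<le> \<bar>u $ j\<bar>"
  shows "off_axis_norm k v \<le> off_axis_norm k u"
  unfolding off_axis_norm_def
  by (intro real_sqrt_le_mono sum_mono) (use assms in \<open>auto simp: abs_le_square_iff\<close>)

lemma off_axis_norm_scaleR: "off_axis_norm k (c *\<^sub>R v) = \<bar>c\<bar> * off_axis_norm k v"
  by (simp add: off_axis_norm_def power_mult_distrib sum_distrib_left[symmetric] real_sqrt_mult)

lemma off_axis_norm_le_scaled:
  assumes "0 \<le> c" "\<And>j. j \<noteq> k \<Longrightarrow> \<bar>v $ j\<bar> \<le> c * \<bar>u $ j\<bar>"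
  shows "off_axis_norm k v \<le> c * off_axis_norm k u"
  using off_axis_norm_mono[of k v "c *\<^sub>R u"] assms by (simp add: off_axis_norm_scaleR abs_mult)

lemma off_axis_norm_le_contraction:
  assumes small: "op_norm F \<le> 1/2"
    and dominated: "\<And>j. j \<noteq> k \<Longrightarrow> \<bar>w $ j\<bar> \<le> \<bar>(F *v w) $ j\<bar>"
  shows "off_axis_norm k w \<le> 2 * op_norm F * \<bar>w $ k\<bar>"
proof -
  let ?s = "off_axis_norm k w" and ?L = "op_norm F"
  have "?s \<le> off_axis_norm k (F *v w)"
    using off_axis_norm_mono dominated by blast
  also have "\<dots> \<le> norm (F *v w)" by (rule off_axis_norm_le_norm)
  also have "\<dots> \<le> ?L * norm w" by (rule norm_matrix_vector_mult_le)
  also have "\<dots> \<le> ?L * (\<bar>w $ k\<bar> + ?s)"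
    by (intro mult_left_mono norm_le_axis_plus_off_axis op_norm_nonneg)
  finally have "?s \<le> ?L * \<bar>w $ k\<bar> + ?L * ?s" by (simp add: algebra_simps)
  moreover have "?L * ?s \<le> 1/2 * ?s"
    by (rule mult_right_mono[OF small off_axis_norm_nonneg])
  ultimately show ?thesis by linarith
qed

lemma axis_component_div_norm_bounds:
  assumes "v \<noteq> 0"
  shows "0 \<le> \<bar>v $ k\<bar> / norm v" "\<bar>v $ k\<bar> / norm v \<le> 1"
  using assms component_le_norm_cart[of v k] by auto

lemma sin_arccos_axis_component:
  assumes "v \<noteq> 0"
  shows "sin (arccos (\<bar>v $ k\<bar> / norm v)) = off_axis_norm k v / norm v"
proof -
  have n: "norm v > 0" using assms by simp
  have "sin (arccos (\<bar>v $ k\<bar> / norm v)) = sqrt (1 - (\<bar>v $ k\<bar> / norm v)\<^sup>2)"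
    using axis_component_div_norm_bounds[OF assms, of k] by (intro sin_arccos) linarith+
  also have "1 - (\<bar>v $ k\<bar> / norm v)\<^sup>2 = ((norm v)\<^sup>2 - (v $ k)\<^sup>2) / (norm v)\<^sup>2"
    using n by (simp add: power_divide field_simps)
  also have "\<dots> = (off_axis_norm k v / norm v)\<^sup>2"
    by (simp add: power_divide norm_sq_axis_split[of v k])
  finally show ?thesis
    using n off_axis_norm_nonneg[of k v] by simp
qed

lemma tan_arccos_axis_component:
  assumes "v $ k \<noteq> 0"
  shows "tan (arccos (\<bar>v $ k\<bar> / norm v)) = off_axis_norm k v / \<bar>v $ k\<bar>"
proof -
  have v: "v \<noteq> 0" using assms by auto
  have "cos (arccos (\<bar>v $ k\<bar> / norm v)) = \<bar>v $ k\<bar> / norm v"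
    using axis_component_div_norm_bounds[OF v, of k] by (intro cos_arccos) linarith+
  then show ?thesis
    using v assms by (simp add: tan_def sin_arccos_axis_component)
qed

lemma gap_le: "j \<noteq> k \<Longrightarrow> gap lam k \<le> \<bar>lam j - lam k\<bar>"
  unfolding gap_def by (rule Min_le) (auto simp: abs_minus_commute)

lemma gap_pos:
  assumes "inj lam" "j \<noteq> k"
  shows "gap lam k > 0"
proof -
  have "gap lam k \<in> {\<bar>lam k - lam j\<bar> | j. j \<noteq> k}"
    unfolding gap_def by (rule Min_in) (use assms(2) in auto)
  then show ?thesis using assms(1) by (auto simp: inj_def)
qed

lemma nu_vec_sq:
  assumes "inj lam" "j \<noteq> k"
  shows "(nu_vec lam k j)\<^sup>2 = 2 / \<bar>lam j - lam k\<bar>"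
proof -
  have d: "\<bar>lam j - lam k\<bar> > 0" using assms by (auto simp: inj_def)
  then have "\<bar>lam j - lam k\<bar> powr (-1/2) = 1 / sqrt \<bar>lam j - lam k\<bar>"
    by (simp add: powr_minus_divide powr_half_sqrt)
  then show ?thesis using assms d
    by (simp add: nu_vec_def power_mult_distrib power_divide)
qed

lemma nu_vec_pos:
  assumes "inj lam" "\<And>i. lam i > 0" "j \<noteq> k"
  shows "nu_vec lam k i > 0"
proof (cases "i = k")
  case True
  have "nu_vec lam k k = Max {sqrt (lam i / (\<bar>lam i - lam k\<bar> * lam k)) | i. i \<noteq> k}"
    by (simp add: nu_vec_def)
  also have "\<dots> \<in> {sqrt (lam i / (\<bar>lam i - lam k\<bar> * lam k)) | i. i \<noteq> k}"
    by (rule Max_in) (use assms(3) in auto)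
  finally obtain l where l: "l \<noteq> k" "nu_vec lam k k = sqrt (lam l / (\<bar>lam l - lam k\<bar> * lam k))"
    by blast
  moreover have "lam l \<noteq> lam k"
    using assms(1) l(1) by (simp add: inj_eq)
  ultimately show ?thesis
    using assms(2)[of l] assms(2)[of k] True by simp
next
  case False
  moreover have "lam i \<noteq> lam k"
    using assms(1) False by (simp add: inj_eq)
  ultimately show ?thesis by (simp add: nu_vec_def)
qed

lemma nu_vec_le_gap:
  assumes "inj lam" "\<And>i. lam i > 0" "j \<noteq> k"
  shows "nu_vec lam k j \<le> sqrt (2 / gap lam k)"
proof -
  have "(nu_vec lam k j)\<^sup>2 \<le> 2 / gap lam k"
    using nu_vec_sq[OF assms(1,3)] gap_le[OF assms(3)] gap_pos[OF assms(1,3)]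
    by (simp add: frac_le)
  then show ?thesis
    using nu_vec_pos[OF assms] by (simp add: real_le_rsqrt)
qed

lemma nu_vec_sq_mult_dist_ge_1:
  assumes "inj lam" "j \<noteq> k" "\<bar>lam k - x\<bar> \<le> \<bar>lam j - x\<bar>"
  shows "1 \<le> (nu_vec lam k j)\<^sup>2 * \<bar>x - lam j\<bar>"
proof -
  have "\<bar>lam j - lam k\<bar> > 0" using assms by (auto simp: inj_def)
  moreover have "\<bar>lam j - lam k\<bar> \<le> 2 * \<bar>x - lam j\<bar>"
    using assms(3) by (auto simp: abs_if split: if_splits)
  ultimately show ?thesis by (simp add: nu_vec_sq[OF assms(1,2)] field_simps)
qed

lemma scaled_mat_eigen_coordinates:
  assumes eig: "(diag_mat lam + E) *v \<eta> = x *\<^sub>R \<eta>"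
    and nz: "\<And>j. nu j \<noteq> 0"
  defines "w \<equiv> \<chi> j. \<eta> $ j / nu j"
  shows "(scaled_mat nu E *v w) $ j = (nu j)\<^sup>2 * (x - lam j) * w $ j"
proof -
  have "scaled_mat nu E *v w = diag_mat nu *v (E *v (diag_mat nu *v w))"
    by (simp add: scaled_mat_def matrix_vector_mul_assoc matrix_mul_assoc)
  also have "diag_mat nu *v w = \<eta>"
    using nz by (simp add: vec_eq_iff diag_mat_mult_vec_nth w_def)
  finally have "scaled_mat nu E *v w = diag_mat nu *v (E *v \<eta>)" .
  moreover have "(E *v \<eta>) $ j = (x - lam j) * \<eta> $ j"
    using arg_cong[OF eig, of "\<lambda>v. v $ j"]
    by (simp add: matrix_vector_mult_add_rdistrib diag_mat_mult_vec_nth algebra_simps)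
  ultimately show ?thesis
    using nz by (simp add: diag_mat_mult_vec_nth w_def power2_eq_square)
qed

lemma eigenvector_off_axis_bound:
  fixes lam :: "'n::finite \<Rightarrow> real"
  assumes other: "j0 \<noteq> k"
    and pos: "\<And>i. lam i > 0"
    and distinct: "inj lam"
    and eig: "(diag_mat lam + E) *v \<eta> = x *\<^sub>R \<eta>"
    and kmin: "\<And>m. \<bar>lam k - x\<bar> \<le> \<bar>lam m - x\<bar>"
    and h1: "op_norm (scaled_mat (nu_vec lam k) E) \<le> 1/2"
    and h2: "op_norm (scaled_mat (nu_vec lam k) E)
               \<le> q * sqrt (gap lam k) * nu_vec lam k k / (2 * sqrt 2)"
  shows "off_axis_norm k \<eta> \<le> q * \<bar>\<eta> $ k\<bar>"
proof -
  define \<nu> where "\<nu> = nu_vec lam k"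
  define L where "L = op_norm (scaled_mat \<nu> E)"
  define w where "w = (\<chi> j. \<eta> $ j / \<nu> j)"
  have \<nu>_pos: "\<nu> j > 0" for j
    unfolding \<nu>_def using nu_vec_pos[OF distinct pos other] .
  have \<eta>_w: "\<eta> $ j = \<nu> j * w $ j" for j
    using \<nu>_pos[of j] by (simp add: w_def)
  have Fw: "(scaled_mat \<nu> E *v w) $ j = (\<nu> j)\<^sup>2 * (x - lam j) * w $ j" for j
    unfolding w_def using \<nu>_pos by (intro scaled_mat_eigen_coordinates[OF eig]) (metis less_irrefl)
  have sqrt_nonneg: "0 \<le> sqrt (2 / gap lam k)"
    using gap_pos[OF distinct other] by simp
  have w_bound: "off_axis_norm k w \<le> 2 * L * \<bar>w $ k\<bar>"
    unfolding L_def
  proof (rule off_axis_norm_le_contraction)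
    fix j assume j: "j \<noteq> k"
    have "\<bar>w $ j\<bar> \<le> (\<nu> j)\<^sup>2 * \<bar>x - lam j\<bar> * \<bar>w $ j\<bar>"
      using nu_vec_sq_mult_dist_ge_1[OF distinct j kmin] by (simp add: \<nu>_def mult_le_cancel_right1)
    also have "\<dots> = \<bar>(scaled_mat \<nu> E *v w) $ j\<bar>"
      by (simp add: Fw abs_mult)
    finally show "\<bar>w $ j\<bar> \<le> \<bar>(scaled_mat \<nu> E *v w) $ j\<bar>" .
  qed (use h1 in \<open>simp add: \<nu>_def\<close>)
  have "off_axis_norm k \<eta> \<le> sqrt (2 / gap lam k) * off_axis_norm k w"
  proof (rule off_axis_norm_le_scaled[OF sqrt_nonneg])
    fix j assume "j \<noteq> k"
    then show "\<bar>\<eta> $ j\<bar> \<le> sqrt (2 / gap lam k) * \<bar>w $ j\<bar>"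
      using nu_vec_le_gap[OF distinct pos] \<nu>_pos[of j]
      by (simp add: \<eta>_w abs_mult \<nu>_def mult_right_mono)
  qed
  also have "\<dots> \<le> sqrt (2 / gap lam k) * (2 * L * \<bar>w $ k\<bar>)"
    using w_bound sqrt_nonneg by (rule mult_left_mono)
  also have "\<dots> = sqrt (2 / gap lam k) * (2 * L) * \<bar>w $ k\<bar>"
    by (simp only: mult.assoc)
  also have "\<dots> \<le> q * \<nu> k * \<bar>w $ k\<bar>"
  proof (rule mult_right_mono)
    have "sqrt (2 / gap lam k) * (2 * L)
            \<le> sqrt (2 / gap lam k) * (2 * (q * sqrt (gap lam k) * \<nu> k / (2 * sqrt 2)))"
      using h2 sqrt_nonneg by (intro mult_left_mono) (simp_all add: L_def \<nu>_def)
    also have "\<dots> = q * \<nu> k"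
      using gap_pos[OF distinct other] by (simp add: real_sqrt_divide)
    finally show "sqrt (2 / gap lam k) * (2 * L) \<le> q * \<nu> k" .
  qed simp
  also have "\<dots> = q * \<bar>\<eta> $ k\<bar>"
    using \<nu>_pos[of k] by (simp add: \<eta>_w abs_mult)
  finally show ?thesis .
qed

lemma axis_angle_bounds:
  assumes "v \<noteq> 0" and off: "off_axis_norm k v \<le> q * \<bar>v $ k\<bar>"
  shows "v $ k \<noteq> 0" "tan (arccos (\<bar>v $ k\<bar> / norm v)) \<le> q"
    "sin (arccos (\<bar>v $ k\<bar> / norm v)) \<le> q"
proof -
  show vk: "v $ k \<noteq> 0"
  proof
    assume "v $ k = 0"
    have "norm v \<le> \<bar>v $ k\<bar> + off_axis_norm k v"
      by (rule norm_le_axis_plus_off_axis)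
    also have "\<dots> \<le> 0"
      using off \<open>v $ k = 0\<close> by simp
    finally show False
      using assms(1) by simp
  qed
  show tan: "tan (arccos (\<bar>v $ k\<bar> / norm v)) \<le> q"
    using off vk by (simp add: tan_arccos_axis_component divide_le_eq)
  have "sin (arccos (\<bar>v $ k\<bar> / norm v)) \<le> tan (arccos (\<bar>v $ k\<bar> / norm v))"
    using assms(1) vk component_le_norm_cart[of v k] off_axis_norm_nonneg[of k v]
    by (simp add: sin_arccos_axis_component tan_arccos_axis_component divide_left_mono)
  with tan show "sin (arccos (\<bar>v $ k\<bar> / norm v)) \<le> q"
    by linarith
qed

lemma exists_other_index:
  fixes k :: "'n::finite"
  assumes "CARD('n) \<ge> 2"
  obtains j :: 'n where "j \<noteq> k"
proof -
  have "(UNIV :: 'n set) \<noteq> {k}"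
  proof
    assume "(UNIV :: 'n set) = {k}"
    then have "CARD('n) = Suc 0" using card_1_singleton_iff by blast
    with assms show False by simp
  qed
  then show ?thesis using that by blast
qed

theorem mainTheorem6:
  fixes lam :: "'n::finite \<Rightarrow> real"
    and E :: "real ^ 'n ^ 'n"
    and x q :: real
    and k :: 'n
  assumes p2: "CARD('n) \<ge> 2"
    and pos: "\<And>i. lam i > 0"
    and distinct: "inj lam"
    and symm: "transpose E = E"
    and eig: "\<exists>v. v \<noteq> 0 \<and> (diag_mat lam + E) *v v = x *\<^sub>R v"
    and kmin: "\<And>m. \<bar>lam k - x\<bar> \<le> \<bar>lam m - x\<bar>"
    and qpos: "q > 0"
    and h1: "op_norm (scaled_mat (nu_vec lam k) E) \<le> 1/2"
    and h2: "op_norm (scaled_mat (nu_vec lam k) E)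
               \<le> q * sqrt (gap lam k) * nu_vec lam k k / (2 * sqrt 2)"
  shows "\<forall>\<eta>. \<eta> \<noteq> 0 \<and> (diag_mat lam + E) *v \<eta> = x *\<^sub>R \<eta> \<longrightarrow>
           \<eta> \<bullet> axis k 1 \<noteq> 0 \<and>
           (let \<theta> = arccos (\<bar>\<eta> \<bullet> axis k 1\<bar> / norm \<eta>) in tan \<theta> \<le> q \<and> sin \<theta> \<le> q)"
proof (intro allI impI)
  fix \<eta> :: "real ^ 'n"
  assume \<eta>: "\<eta> \<noteq> 0 \<and> (diag_mat lam + E) *v \<eta> = x *\<^sub>R \<eta>"
  obtain j0 :: 'n where "j0 \<noteq> k"
    using exists_other_index[OF p2] .
  then have "off_axis_norm k \<eta> \<le> q * \<bar>\<eta> $ k\<bar>"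
    using eigenvector_off_axis_bound pos distinct \<eta> kmin h1 h2 by blast
  with \<eta> have "\<eta> $ k \<noteq> 0" "tan (arccos (\<bar>\<eta> $ k\<bar> / norm \<eta>)) \<le> q"
    "sin (arccos (\<bar>\<eta> $ k\<bar> / norm \<eta>)) \<le> q"
    by (simp_all add: axis_angle_bounds)
  then show "\<eta> \<bullet> axis k 1 \<noteq> 0 \<and>
      (let \<theta> = arccos (\<bar>\<eta> \<bullet> axis k 1\<bar> / norm \<eta>) in tan \<theta> \<le> q \<and> sin \<theta> \<le> q)"
    by (simp add: inner_axis)
qed

end
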